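(* Let $g\ge0$, let $\mu,\nu$ be partitions of $n\ge1$ with $g-1+\ell(\mu)+\ell(\nu)>0$, and let $\Gamma$ be a twisted monodromy graph of type $(g,\mu,\nu)$. Then $\Gamma$ has at most $g+1$ $4$-valent vertices.
   Context: A twisted monodromy graph of type $(g,\mu,\nu)$ is a connected directed graph $\Gamma$ of genus (first Betti number) $g$ whose inner vertices are $3$- or $4$-valent, together with an involution $\iota$ of $\Gamma$ whose fixed points are exactly the $4$-valent vertices, such that: $\Gamma$ has $2\ell(\mu)$ inward ends with weights $\mu_i$ and $2\ell(\nu)$ outward ends with weights $\nu_j$, ends exchanged by $\iota$ having the same weight; no inner vertex is a sink or a source; every bounded edge carries a positive integer weight satisfying balancing (at each inner vertex the weights of incoming edges sum to the weights of outgoing edges); the four edges at a $4$-valent vertex have the same weight; $\iota$ preserves weights; and the $\iota$-orbits of inner vertices are totally ordered compatibly with the edge directions. *)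

theory Defs
  imports Main "HOL-Library.Multiset"
begin

definition is_partition :: "nat multiset \<Rightarrow> nat \<Rightarrow> bool" where
  "is_partition \<mu> n \<longleftrightarrow> 0 \<notin># \<mu> \<and> sum_mset \<mu> = n"

text \<open>Ends are modelled as edges
  incident to a 1-valent (leaf) vertex; the inner vertices are the vertices of
  valence different from 1.\<close>

definition valence :: "'e set \<Rightarrow> ('e \<Rightarrow> 'v) \<Rightarrow> ('e \<Rightarrow> 'v) \<Rightarrow> 'v \<Rightarrow> nat" where
  "valence E src tgt v = card {e \<in> E. src e = v} + card {e \<in> E. tgt e = v}"

definition inner_vertices :: "'v set \<Rightarrow> 'e set \<Rightarrow> ('e \<Rightarrow> 'v) \<Rightarrow> ('e \<Rightarrow> 'v) \<Rightarrow> 'v set" where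
  "inner_vertices V E src tgt = {v \<in> V. valence E src tgt v \<noteq> 1}"

definition leaf_vertices :: "'v set \<Rightarrow> 'e set \<Rightarrow> ('e \<Rightarrow> 'v) \<Rightarrow> ('e \<Rightarrow> 'v) \<Rightarrow> 'v set" where
  "leaf_vertices V E src tgt = {v \<in> V. valence E src tgt v = 1}"

definition in_ends :: "'v set \<Rightarrow> 'e set \<Rightarrow> ('e \<Rightarrow> 'v) \<Rightarrow> ('e \<Rightarrow> 'v) \<Rightarrow> 'e set" where
  "in_ends V E src tgt = {e \<in> E. src e \<in> leaf_vertices V E src tgt}"

definition out_ends :: "'v set \<Rightarrow> 'e set \<Rightarrow> ('e \<Rightarrow> 'v) \<Rightarrow> ('e \<Rightarrow> 'v) \<Rightarrow> 'e set" where
  "out_ends V E src tgt = {e \<in> E. tgt e \<in> leaf_vertices V E src tgt}"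

definition connected_graph :: "'v set \<Rightarrow> 'e set \<Rightarrow> ('e \<Rightarrow> 'v) \<Rightarrow> ('e \<Rightarrow> 'v) \<Rightarrow> bool" where
  "connected_graph V E src tgt \<longleftrightarrow>
     (\<forall>u\<in>V. \<forall>v\<in>V. (u, v) \<in> ({(src e, tgt e) | e. e \<in> E} \<union> {(tgt e, src e) | e. e \<in> E})\<^sup>*)"

definition betti :: "'v set \<Rightarrow> 'e set \<Rightarrow> int" where
  "betti V E = int (card E) - int (card V) + 1"

text \<open>The total order on the
  iota-orbits of inner vertices compatible with edge directions is encoded by a
  rank function r on inner vertices whose fibres are exactly the iota-orbits and
  which strictly increases along every edge between inner vertices.\<close>
definition twisted_monodromy_graph ::
  "nat \<Rightarrow> nat multiset \<Rightarrow> nat multiset \<Rightarrow> 'v set \<Rightarrow> 'e set \<Rightarrow> ('e \<Rightarrow> 'v) \<Rightarrow> ('e \<Rightarrow> 'v)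
     \<Rightarrow> ('e \<Rightarrow> nat) \<Rightarrow> ('v \<Rightarrow> 'v) \<Rightarrow> ('e \<Rightarrow> 'e) \<Rightarrow> bool" where
  "twisted_monodromy_graph g \<mu> \<nu> V E src tgt w iV iE \<longleftrightarrow>
     (let IV = inner_vertices V E src tgt;
          Ein = in_ends V E src tgt;
          Eout = out_ends V E src tgt
      in
     \<comment> \<open>finite directed graph with ends\<close>
     finite V \<and> finite E \<and> (\<forall>e\<in>E. src e \<in> V \<and> tgt e \<in> V) \<and>
     (\<forall>e\<in>E. src e \<in> IV \<or> tgt e \<in> IV) \<and>
     \<comment> \<open>connected, of genus g\<close>
     connected_graph V E src tgt \<and> betti V E = int g \<and>
     \<comment> \<open>inner vertices are 3- or 4-valent\<close>
     (\<forall>v\<in>IV. valence E src tgt v = 3 \<or> valence E src tgt v = 4) \<and>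
     \<comment> \<open>iota is an involutive automorphism of the directed graph\<close>
     (\<forall>v\<in>V. iV v \<in> V \<and> iV (iV v) = v) \<and>
     (\<forall>e\<in>E. iE e \<in> E \<and> iE (iE e) = e \<and> src (iE e) = iV (src e) \<and> tgt (iE e) = iV (tgt e)) \<and>
     \<comment> \<open>fixed points of iota are exactly the 4-valent vertices\<close>
     (\<forall>v\<in>V. iV v = v \<longleftrightarrow> v \<in> IV \<and> valence E src tgt v = 4) \<and>
     (\<forall>e\<in>E. iE e \<noteq> e) \<and>
     \<comment> \<open>iota preserves weights; weights are positive\<close>
     (\<forall>e\<in>E. w (iE e) = w e) \<and> (\<forall>e\<in>E. 0 < w e) \<and>
     \<comment> \<open>2 l(mu) inward ends of weights mu_i (each twice), 2 l(nu) outward ends of weights nu_j\<close>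
     image_mset w (mset_set Ein) = \<mu> + \<mu> \<and>
     image_mset w (mset_set Eout) = \<nu> + \<nu> \<and>
     \<comment> \<open>no inner vertex is a sink or a source\<close>
     (\<forall>v\<in>IV. (\<exists>e\<in>E. tgt e = v) \<and> (\<exists>e\<in>E. src e = v)) \<and>
     \<comment> \<open>balancing\<close>
     (\<forall>v\<in>IV. (\<Sum>e\<in>{e\<in>E. tgt e = v}. w e) = (\<Sum>e\<in>{e\<in>E. src e = v}. w e)) \<and>
     \<comment> \<open>the four edges at a 4-valent vertex have the same weight\<close>
     (\<forall>v\<in>IV. valence E src tgt v = 4 \<longrightarrow>
        (\<forall>e\<in>E. \<forall>e'\<in>E. (src e = v \<or> tgt e = v) \<longrightarrow> (src e' = v \<or> tgt e' = v) \<longrightarrow> w e = w e')) \<and>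
     \<comment> \<open>iota-orbits of inner vertices totally ordered compatibly with edge directions\<close>
     (\<exists>r :: 'v \<Rightarrow> nat.
        (\<forall>u\<in>IV. \<forall>v\<in>IV. r u = r v \<longleftrightarrow> (v = u \<or> v = iV u)) \<and>
        (\<forall>e\<in>E. src e \<in> IV \<longrightarrow> tgt e \<in> IV \<longrightarrow> r (src e) < r (tgt e))))"

end

theory Submission
  imports Defs
begin

text \<open>The involution \<iota> induces a quotient graph whose vertices are the \<iota>-orbits of vertices and
  whose edges are the \<iota>-orbits of edges.  It is connected, so it has at most one vertex more than
  it has edges.  Since \<iota> has no fixed edges, there are |E|/2 edge orbits, while the F fixed vertices
  give (|V| + F)/2 vertex orbits.  Hence (|V| + F)/2 \<le> |E|/2 + 1, i.e. F \<le> |E| - |V| + 2 = g + 1.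
  Only connectivity, the genus and the fixed points of \<iota> enter.\<close>

lemma rtrancl_map:
  assumes "\<And>x y. (x, y) \<in> r \<Longrightarrow> (f x, f y) \<in> s" and "(x, y) \<in> r\<^sup>*"
  shows "(f x, f y) \<in> s\<^sup>*"
  using assms(2) by induction (auto intro: rtrancl_into_rtrancl assms(1))

text \<open>Breadth-first tree: every vertex other than a root v0 is mapped injectively to an edge
  joining it to a vertex one step closer to v0.\<close>

lemma card_le_Suc_card_edges_if_connected:
  fixes V :: "'a set" and P :: "('a \<times> 'a) set"
  assumes P_sub: "P \<subseteq> V \<times> V" and conn: "\<forall>u\<in>V. \<forall>v\<in>V. (u, v) \<in> (P \<union> P\<inverse>)\<^sup>*"
  shows "card V \<le> card P + 1"
proof (cases "finite V \<and> V \<noteq> {}")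
  case False
  then show ?thesis by auto
next
  case True
  then obtain v\<^sub>0 where v\<^sub>0: "v\<^sub>0 \<in> V" by auto
  define R where "R = P \<union> P\<inverse>"
  define d where "d u = (LEAST n. (v\<^sub>0, u) \<in> R ^^ n)" for u
  have d_le: "d u \<le> n" if "(v\<^sub>0, u) \<in> R ^^ n" for u n
    unfolding d_def using that by (rule Least_le)
  have d_path: "(v\<^sub>0, u) \<in> R ^^ d u" if "(v\<^sub>0, u) \<in> R ^^ n" for u n
    unfolding d_def using that by (rule LeastI)
  have parent: "\<exists>x. ((x, u) \<in> P \<or> (u, x) \<in> P) \<and> Suc (d x) = d u"
    if u: "u \<in> V" "u \<noteq> v\<^sub>0" for u
  proof -
    obtain n where "(v\<^sub>0, u) \<in> R ^^ n"
      using conn v\<^sub>0 u(1) rtrancl_power unfolding R_def by blast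
    then have path: "(v\<^sub>0, u) \<in> R ^^ d u" by (rule d_path)
    with u(2) obtain m where m: "d u = Suc m" by (cases "d u") auto
    with path obtain x where x: "(v\<^sub>0, x) \<in> R ^^ m" "(x, u) \<in> R" by (auto elim: relpow_Suc_E)
    have "(v\<^sub>0, u) \<in> R ^^ Suc (d x)" using d_path[OF x(1)] x(2) by auto
    then have "Suc (d x) = d u" using d_le[OF x(1)] d_le m by fastforce
    with x(2) show ?thesis unfolding R_def by blast
  qed
  define parent_edge where
    "parent_edge u = (SOME p. p \<in> P \<and> (\<exists>x. (p = (x, u) \<or> p = (u, x)) \<and> Suc (d x) = d u))" for u
  have parent_edge: "parent_edge u \<in> P \<and> (\<exists>x. (parent_edge u = (x, u) \<or> parent_edge u = (u, x))
      \<and> Suc (d x) = d u)" if "u \<in> V - {v\<^sub>0}" for u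
    unfolding parent_edge_def by (rule someI_ex) (use parent that in blast)
  have "inj_on parent_edge (V - {v\<^sub>0})"
  proof (rule inj_onI)
    fix a b assume "a \<in> V - {v\<^sub>0}" "b \<in> V - {v\<^sub>0}" "parent_edge a = parent_edge b"
    then show "a = b" using parent_edge[of a] parent_edge[of b] by auto
  qed
  moreover have "parent_edge ` (V - {v\<^sub>0}) \<subseteq> P" using parent_edge by blast
  moreover have "finite P" using True P_sub finite_subset by blast
  ultimately have "card (V - {v\<^sub>0}) \<le> card P" by (rule card_inj_on_le)
  then show ?thesis using v\<^sub>0 True by (simp add: card_Diff_singleton)
qed

lemma card_image_le_if_factors:
  assumes "finite A" and factors: "\<And>x y. x \<in> A \<Longrightarrow> y \<in> A \<Longrightarrow> h x = h y \<Longrightarrow> f x = f y"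
  shows "card (f ` A) \<le> card (h ` A)"
proof -
  have "f x = f (inv_into A h (h x))" if "x \<in> A" for x
    using that by (intro factors) (auto intro: inv_into_into f_inv_into_f[symmetric])
  then have "f ` A = (\<lambda>z. f (inv_into A h z)) ` h ` A"
    unfolding image_image by (rule image_cong[OF refl])
  then show ?thesis using assms(1) by (metis card_image_le finite_imageI)
qed

lemma card_involution_orbits:
  assumes "finite A" and inv: "\<And>x. x \<in> A \<Longrightarrow> \<sigma> x \<in> A \<and> \<sigma> (\<sigma> x) = x"
  shows "2 * card ((\<lambda>x. {x, \<sigma> x}) ` A) = card A + card {x \<in> A. \<sigma> x = x}"
proof -
  let ?orbits = "(\<lambda>x. {x, \<sigma> x}) ` A"
  define c :: "_ \<Rightarrow> nat" where "c x = 1 + of_bool (\<sigma> x = x)" for x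
  have "{x, \<sigma> x} = {y, \<sigma> y}" if "x \<in> A" "y \<in> A" "z \<in> {x, \<sigma> x}" "z \<in> {y, \<sigma> y}" for x y z
    using that inv[of x] inv[of y] by (elim insertE) (auto simp: insert_commute)
  then have disjoint: "\<forall>B\<in>?orbits. \<forall>B'\<in>?orbits. B \<noteq> B' \<longrightarrow> B \<inter> B' = {}"
    by blast
  have "card A + card {x \<in> A. \<sigma> x = x} = (\<Sum>x\<in>A. c x)"
    using assms(1) by (simp only: c_def sum.distrib card_eq_sum sum.inter_filter of_bool_def)
  also have "\<dots> = (\<Sum>x\<in>\<Union> ?orbits. c x)"
    using inv by (intro sum.cong) auto
  also have "\<dots> = (\<Sum>B\<in>?orbits. \<Sum>x\<in>B. c x)"
    using disjoint by (intro sum.Union_disjoint[unfolded comp_def]) auto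
  also have "\<dots> = (\<Sum>B\<in>?orbits. 2)"
  proof (rule sum.cong)
    fix B assume "B \<in> ?orbits"
    then obtain x where "x \<in> A" "B = {x, \<sigma> x}" by blast
    then show "(\<Sum>x\<in>B. c x) = 2" using inv[of x] by (cases "\<sigma> x = x") (auto simp: c_def)
  qed simp
  finally show ?thesis by (simp add: mult.commute)
qed

lemma card_fixed_vertices_le_betti_plus_one:
  assumes "finite V" and "finite E" and ends: "\<forall>e\<in>E. src e \<in> V \<and> tgt e \<in> V"
    and conn: "connected_graph V E src tgt"
    and iV: "\<forall>v\<in>V. iV v \<in> V \<and> iV (iV v) = v"
    and iE: "\<forall>e\<in>E. iE e \<in> E \<and> iE (iE e) = e \<and> src (iE e) = iV (src e) \<and> tgt (iE e) = iV (tgt e)"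
    and no_fixed_edge: "\<forall>e\<in>E. iE e \<noteq> e"
  shows "int (card {v \<in> V. iV v = v}) \<le> betti V E + 1"
proof -
  define vorbit where "vorbit v = {v, iV v}" for v
  define eorbit where "eorbit e = {e, iE e}" for e
  define quotient_edge where "quotient_edge e = (vorbit (src e), vorbit (tgt e))" for e
  let ?P = "quotient_edge ` E"
  have vorbit_iV: "vorbit (iV v) = vorbit v" if "v \<in> V" for v
    using iV that unfolding vorbit_def by auto
  let ?R = "{(src e, tgt e) | e. e \<in> E} \<union> {(tgt e, src e) | e. e \<in> E}"
  have step: "(vorbit x, vorbit y) \<in> ?P \<union> ?P\<inverse>" if "(x, y) \<in> ?R" for x y
    using that unfolding quotient_edge_def by auto
  have path: "(vorbit u, vorbit v) \<in> (?P \<union> ?P\<inverse>)\<^sup>*" if "u \<in> V" "v \<in> V" for u v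
    using conn that unfolding connected_graph_def by (intro rtrancl_map[of ?R, OF step]) auto
  have "?P \<subseteq> vorbit ` V \<times> vorbit ` V"
    using ends unfolding quotient_edge_def by auto
  moreover have "\<forall>u\<in>vorbit ` V. \<forall>v\<in>vorbit ` V. (u, v) \<in> (?P \<union> ?P\<inverse>)\<^sup>*"
    using path by blast
  ultimately have "card (vorbit ` V) \<le> card ?P + 1"
    by (rule card_le_Suc_card_edges_if_connected)
  also have "card ?P \<le> card (eorbit ` E)"
  proof (rule card_image_le_if_factors[OF \<open>finite E\<close>])
    fix a b assume "a \<in> E" "b \<in> E" "eorbit a = eorbit b"
    then have "a = b \<or> a = iE b" unfolding eorbit_def by (auto simp: doubleton_eq_iff)
    then show "quotient_edge a = quotient_edge b"
      using iE ends vorbit_iV \<open>b \<in> E\<close> unfolding quotient_edge_def by auto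
  qed
  finally have "2 * card (vorbit ` V) \<le> 2 * card (eorbit ` E) + 2" by simp
  moreover have "2 * card (vorbit ` V) = card V + card {v \<in> V. iV v = v}"
    unfolding vorbit_def using \<open>finite V\<close> iV by (intro card_involution_orbits) auto
  moreover have "2 * card (eorbit ` E) = card E"
    unfolding eorbit_def using \<open>finite E\<close> iE no_fixed_edge
    by (subst card_involution_orbits) auto
  ultimately show ?thesis unfolding betti_def by linarith
qed

theorem lemma6p5:
  fixes g n :: nat and \<mu> \<nu> :: "nat multiset"
    and V :: "'v set" and E :: "'e set" and src tgt :: "'e \<Rightarrow> 'v"
    and w :: "'e \<Rightarrow> nat" and iV :: "'v \<Rightarrow> 'v" and iE :: "'e \<Rightarrow> 'e"
  assumes "1 \<le> n"
    and "is_partition \<mu> n" and "is_partition \<nu> n"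
    and "int g - 1 + int (size \<mu>) + int (size \<nu>) > 0"
    and "twisted_monodromy_graph g \<mu> \<nu> V E src tgt w iV iE"
  shows "card {v \<in> inner_vertices V E src tgt. valence E src tgt v = 4} \<le> g + 1"
proof -
  note tmg = assms(5)[unfolded twisted_monodromy_graph_def Let_def]
  have graph: "finite V" "finite E" "\<forall>e\<in>E. src e \<in> V \<and> tgt e \<in> V" "connected_graph V E src tgt"
    and betti: "betti V E = int g"
    and involution: "\<forall>v\<in>V. iV v \<in> V \<and> iV (iV v) = v"
      "\<forall>e\<in>E. iE e \<in> E \<and> iE (iE e) = e \<and> src (iE e) = iV (src e) \<and> tgt (iE e) = iV (tgt e)"
    and fixed_iff: "\<forall>v\<in>V. iV v = v \<longleftrightarrow> v \<in> inner_vertices V E src tgt \<and> valence E src tgt v = 4"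
    and no_fixed_edge: "\<forall>e\<in>E. iE e \<noteq> e"
    using tmg by auto
  have "int (card {v \<in> V. iV v = v}) \<le> int g + 1"
    using card_fixed_vertices_le_betti_plus_one[OF graph involution no_fixed_edge] betti by simp
  moreover have "{v \<in> inner_vertices V E src tgt. valence E src tgt v = 4} = {v \<in> V. iV v = v}"
    using fixed_iff unfolding inner_vertices_def by auto
  ultimately show ?thesis by simp
qed

end
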